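(* Let $\Psi:\mathbb{R}^n\to\mathbb{R}$ be differentiable with $\|\nabla\Psi(y)-\nabla\Psi(x)\|\le L_\Psi\|y-x\|$ for all $x,y$ (with $L_\Psi>0$), bounded from below, and let $\Psi^*=\inf_{x\in\mathbb{R}^n}\Psi(x)$. Consider the accelerated gradient (AG) method: given $x_0\in\mathbb{R}^n$, parameters $\{\alpha_k\}$ with $\alpha_1=1$, $\alpha_k\in(0,1)$ for $k\ge2$, $\{\beta_k>0\}$ and $\{\lambda_k>0\}$, set $x^{ag}_0=x_0$ and for $k=1,2,\ldots$ $$x^{md}_k=(1-\alpha_k)x^{ag}_{k-1}+\alpha_kx_{k-1},\quad x_k=x_{k-1}-\lambda_k\nabla\Psi(x^{md}_k),\quad x^{ag}_k=x^{md}_k-\beta_k\nabla\Psi(x^{md}_k).$$ Let $\Gamma_1=1$ and $\Gamma_k=(1-\alpha_k)\Gamma_{k-1}$ for $k\ge2$. (a) Let $N\ge1$. If for all $k=1,\ldots,N$ $$C_k:=1-L_\Psi\lambda_k-\frac{L_\Psi(\lambda_k-\beta_k)^2}{2\alpha_k\Gamma_k\lambda_k}\Big(\sum_{\tau=k}^N\Gamma_\tau\Big)>0,$$ then $$\min_{k=1,\ldots,N}\|\nabla\Psi(x^{md}_k)\|^2\le\frac{\Psi(x_0)-\Psi^*}{\sum_{k=1}^N\lambda_kC_k}.$$ (b) Suppose in addition that $\Psi$ is convex and that an optimal solution $x^*$ of $\min_{x\in\mathbb{R}^n}\Psi(x)$ exists. If $\alpha_k\lambda_k\le\beta_k<1/L_\Psi$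 for all $k$ and $\frac{\alpha_1}{\lambda_1\Gamma_1}\ge\frac{\alpha_2}{\lambda_2\Gamma_2}\ge\cdots$, then for any $N\ge1$, $$\min_{k=1,\ldots,N}\|\nabla\Psi(x^{md}_k)\|^2\le\frac{\|x_0-x^*\|^2}{\lambda_1\sum_{k=1}^N\Gamma_k^{-1}\beta_k(1-L_\Psi\beta_k)},\qquad \Psi(x^{ag}_N)-\Psi(x^* )\le\frac{\Gamma_N\|x_0-x^*\|^2}{2\lambda_1}.$$
   Context: $\|\cdot\|$ is the Euclidean norm on $\mathbb{R}^n$. *)

theory Defs
  imports "HOL-Analysis.Analysis"
begin

end

(*
  Write g k for grad (xmd k). The step x k = x (k - 1) - lam k g k is a gradient step that
  uses the gradient at xmd k instead of at x (k - 1); by the Lipschitz condition its error is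
  at most L * norm (xmd k - x (k - 1)) = L (1 - alpha k) norm (xag (k - 1) - x (k - 1)).
  The recursion xag k - x k = (1 - alpha k)(xag (k - 1) - x (k - 1)) + (lam k - beta k) g k
  and convexity of the squared norm bound norm (xag k - x k)^2 by Gamma k times a weighted sum
  of the earlier norm (g tau)^2. Summing the perturbed descent inequalities for Psi (x k) and
  exchanging the order of the resulting double sum gives (a).

  For convex Psi with minimiser xs, the descent step from xmd k to xag k, the gradient
  inequality at xmd k tested against xag (k - 1) and xs, and the expansion of
  norm (x k - xs)^2 combine into a one-step recursion for Psi (xag k) - Psi xs. Divided by
  Gamma k it telescopes, since (1 - alpha k) / Gamma k = 1 / Gamma (k - 1) and
  alpha k / (lam k Gamma k) is nonincreasing; this gives (b).
*)

theory Submission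
  imports Defs
begin

lemma has_real_derivative_along_line:
  fixes \<Psi> :: "'a::real_inner \<Rightarrow> real"
  assumes grad: "\<And>z. (\<Psi> has_derivative (\<lambda>h. grad z \<bullet> h)) (at z)"
  shows "((\<lambda>t. \<Psi> (u + t *\<^sub>R d)) has_real_derivative (grad (u + t *\<^sub>R d) \<bullet> d)) (at t)"
proof -
  have "((\<lambda>t. u + t *\<^sub>R d) has_derivative (\<lambda>h. h *\<^sub>R d)) (at t)"
    by (auto intro!: derivative_eq_intros)
  from has_derivative_compose[OF this grad]
  have "((\<lambda>t. \<Psi> (u + t *\<^sub>R d)) has_derivative (\<lambda>h. grad (u + t *\<^sub>R d) \<bullet> (h *\<^sub>R d))) (at t)"
    by (simp add: o_def)
  moreover have "(\<lambda>h. grad (u + t *\<^sub>R d) \<bullet> (h *\<^sub>R d)) = (*) (grad (u + t *\<^sub>R d) \<bullet> d)"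
    by (auto simp: mult.commute)
  ultimately show ?thesis
    by (simp add: has_field_derivative_def)
qed

lemma lipschitz_gradient_upper_bound:
  fixes \<Psi> :: "'a::real_inner \<Rightarrow> real"
  assumes grad: "\<And>z. (\<Psi> has_derivative (\<lambda>h. grad z \<bullet> h)) (at z)"
    and Lip: "\<And>u v. norm (grad v - grad u) \<le> L * norm (v - u)"
  shows "\<Psi> v \<le> \<Psi> u + grad u \<bullet> (v - u) + L / 2 * (norm (v - u))\<^sup>2"
proof -
  define d where "d = v - u"
  define \<phi> where "\<phi> t = \<Psi> (u + t *\<^sub>R d) - t * (grad u \<bullet> d) - L / 2 * t\<^sup>2 * (norm d)\<^sup>2" for t
  have "\<phi> 1 \<le> \<phi> 0"
  proof (rule DERIV_nonpos_imp_nonincreasing[of 0 1], simp)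
    fix t :: real assume t: "0 \<le> t" "t \<le> 1"
    have "(\<phi> has_real_derivative (grad (u + t *\<^sub>R d) - grad u) \<bullet> d - L * t * (norm d)\<^sup>2) (at t)"
      unfolding \<phi>_def
      by (auto intro!: derivative_eq_intros has_real_derivative_along_line[OF grad]
          simp: inner_diff_left)
    moreover have "(grad (u + t *\<^sub>R d) - grad u) \<bullet> d \<le> L * t * (norm d)\<^sup>2"
    proof -
      have "(grad (u + t *\<^sub>R d) - grad u) \<bullet> d \<le> norm (grad (u + t *\<^sub>R d) - grad u) * norm d"
        by (rule norm_cauchy_schwarz)
      also have "\<dots> \<le> L * norm (t *\<^sub>R d) * norm d"
        using Lip[where u=u and v="u + t *\<^sub>R d"] by (intro mult_right_mono) auto
      finally show ?thesis
        using t by (simp add: power2_eq_square mult.assoc)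
    qed
    ultimately show "\<exists>y. (\<phi> has_real_derivative y) (at t) \<and> y \<le> 0"
      by auto
  qed
  then show ?thesis
    by (simp add: \<phi>_def d_def)
qed

lemma convex_gradient_lower_bound:
  fixes \<Psi> :: "'a::real_inner \<Rightarrow> real"
  assumes grad: "\<And>z. (\<Psi> has_derivative (\<lambda>h. grad z \<bullet> h)) (at z)"
    and cvx: "convex_on UNIV \<Psi>"
  shows "\<Psi> u + grad u \<bullet> (v - u) \<le> \<Psi> v"
proof -
  define h where "h = (\<lambda>t. \<Psi> (u + t *\<^sub>R (v - u)))"
  have "convex_on UNIV h"
  proof (rule convex_onI)
    fix t s r :: real assume "0 < t" "t < 1"
    moreover have "u + ((1 - t) *\<^sub>R s + t *\<^sub>R r) *\<^sub>R (v - u)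
        = (1 - t) *\<^sub>R (u + s *\<^sub>R (v - u)) + t *\<^sub>R (u + r *\<^sub>R (v - u))"
      by (simp add: algebra_simps)
    ultimately show "h ((1 - t) *\<^sub>R s + t *\<^sub>R r) \<le> (1 - t) * h s + t * h r"
      unfolding h_def by (metis convex_onD[OF cvx] UNIV_I less_eq_real_def)
  qed simp
  moreover have "(h has_field_derivative (grad u \<bullet> (v - u))) (at 0 within UNIV)"
    using has_real_derivative_along_line[OF grad, of u "v - u" 0] by (simp add: h_def)
  ultimately have "(grad u \<bullet> (v - u)) * (1 - 0) \<le> h 1 - h 0"
    by (intro convex_on_imp_above_tangent[of UNIV]) auto
  then show ?thesis
    by (simp add: h_def)
qed

lemma convex_combination_gradient_lower_bound:
  fixes \<Psi> :: "'a::real_inner \<Rightarrow> real"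
  assumes grad: "\<And>z. (\<Psi> has_derivative (\<lambda>h. grad z \<bullet> h)) (at z)"
    and cvx: "convex_on UNIV \<Psi>"
    and a: "0 \<le> a" "a \<le> 1"
  shows "\<Psi> m + grad m \<bullet> ((1 - a) *\<^sub>R y + a *\<^sub>R z - m) \<le> (1 - a) * \<Psi> y + a * \<Psi> z"
proof -
  have "(1 - a) * (\<Psi> m + grad m \<bullet> (y - m)) \<le> (1 - a) * \<Psi> y"
    "a * (\<Psi> m + grad m \<bullet> (z - m)) \<le> a * \<Psi> z"
    using a by (auto intro!: mult_left_mono convex_gradient_lower_bound[OF grad cvx])
  then show ?thesis
    by (simp add: inner_diff_right inner_add_right algebra_simps)
qed

lemma inexact_gradient_step:
  fixes \<Psi> :: "'a::real_inner \<Rightarrow> real"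
  assumes grad: "\<And>z. (\<Psi> has_derivative (\<lambda>h. grad z \<bullet> h)) (at z)"
    and Lip: "\<And>u v. norm (grad v - grad u) \<le> L * norm (v - u)"
    and L: "L > 0"
  shows "\<Psi> (u - t *\<^sub>R g) \<le> \<Psi> u - t * (1 - L * t) * (norm g)\<^sup>2 + (norm (grad u - g))\<^sup>2 / (2 * L)"
proof -
  define \<Delta> where "\<Delta> = grad u - g"
  have "0 \<le> (norm (\<Delta> + (L * t) *\<^sub>R g))\<^sup>2"
    by simp
  also have "\<dots> = (norm \<Delta>)\<^sup>2 + 2 * L * (t * (\<Delta> \<bullet> g)) + L\<^sup>2 * t\<^sup>2 * (norm g)\<^sup>2"
    unfolding power2_norm_eq_inner
    by (simp add: inner_add_left inner_add_right inner_commute power2_eq_square algebra_simps)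
  finally have young: "- t * (\<Delta> \<bullet> g) \<le> (norm \<Delta>)\<^sup>2 / (2 * L) + L / 2 * t\<^sup>2 * (norm g)\<^sup>2"
    using L by (simp add: field_simps power2_eq_square)
  have "\<Psi> (u - t *\<^sub>R g) \<le> \<Psi> u + grad u \<bullet> (- t *\<^sub>R g) + L / 2 * (norm (- t *\<^sub>R g))\<^sup>2"
    using lipschitz_gradient_upper_bound[OF grad Lip, of "u - t *\<^sub>R g" u] by simp
  also have "\<dots> = \<Psi> u - t * (norm g)\<^sup>2 - t * (\<Delta> \<bullet> g) + L / 2 * t\<^sup>2 * (norm g)\<^sup>2"
    by (simp add: \<Delta>_def inner_diff_left power2_norm_eq_inner power_mult_distrib algebra_simps)
  finally show ?thesis
    using young by (simp add: \<Delta>_def algebra_simps power2_eq_square)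
qed

lemma gradient_step_descent:
  fixes \<Psi> :: "'a::real_inner \<Rightarrow> real"
  assumes grad: "\<And>z. (\<Psi> has_derivative (\<lambda>h. grad z \<bullet> h)) (at z)"
    and Lip: "\<And>u v. norm (grad v - grad u) \<le> L * norm (v - u)"
  shows "\<Psi> (u - t *\<^sub>R grad u) \<le> \<Psi> u - t * (1 - L * t / 2) * (norm (grad u))\<^sup>2"
  using lipschitz_gradient_upper_bound[OF grad Lip, of "u - t *\<^sub>R grad u" u]
  unfolding power2_norm_eq_inner by (simp add: algebra_simps power2_eq_square)

lemma power2_norm_step_distance:
  fixes u g w :: "'a::real_inner"
  shows "(norm (u - t *\<^sub>R g - w))\<^sup>2 = (norm (u - w))\<^sup>2 - 2 * t * (g \<bullet> (u - w)) + t\<^sup>2 * (norm g)\<^sup>2"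
  unfolding power2_norm_eq_inner
  by (simp add: inner_diff_left inner_diff_right inner_commute algebra_simps power2_eq_square)

lemma power2_norm_convex_combination_le:
  fixes p q :: "'a::real_normed_vector"
  assumes "0 \<le> a" "a \<le> 1"
  shows "(norm ((1 - a) *\<^sub>R p + a *\<^sub>R q))\<^sup>2 \<le> (1 - a) * (norm p)\<^sup>2 + a * (norm q)\<^sup>2"
proof -
  have "norm ((1 - a) *\<^sub>R p + a *\<^sub>R q) \<le> (1 - a) * norm p + a * norm q"
    using norm_triangle_ineq[of "(1 - a) *\<^sub>R p" "a *\<^sub>R q"] assms by simp
  then have "(norm ((1 - a) *\<^sub>R p + a *\<^sub>R q))\<^sup>2 \<le> ((1 - a) * norm p + a * norm q)\<^sup>2"
    by (intro power_mono) auto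
  also have "\<dots> = (1 - a) * (norm p)\<^sup>2 + a * (norm q)\<^sup>2 - a * (1 - a) * (norm p - norm q)\<^sup>2"
    by (simp add: power2_eq_square algebra_simps)
  also have "\<dots> \<le> (1 - a) * (norm p)\<^sup>2 + a * (norm q)\<^sup>2"
    using assms by simp
  finally show ?thesis .
qed

lemma Min_le_weighted_bound:
  fixes f w :: "'b \<Rightarrow> real"
  assumes "finite A" "A \<noteq> {}" "\<And>k. k \<in> A \<Longrightarrow> w k > 0"
    and "(\<Sum>k\<in>A. w k * f k) \<le> B"
  shows "Min (f ` A) \<le> B / (\<Sum>k\<in>A. w k)"
proof -
  have "Min (f ` A) * (\<Sum>k\<in>A. w k) = (\<Sum>k\<in>A. w k * Min (f ` A))"
    by (simp add: sum_distrib_right mult.commute)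
  also have "\<dots> \<le> (\<Sum>k\<in>A. w k * f k)"
    using assms by (intro sum_mono mult_left_mono) (auto intro: less_imp_le)
  finally show ?thesis
    using assms by (simp add: pos_le_divide_eq sum_pos)
qed

lemma sum_weighted_partial_sums_le:
  fixes a G :: "nat \<Rightarrow> real"
  assumes "\<And>k. k \<ge> 1 \<Longrightarrow> a k \<ge> 0" "\<And>k. k \<ge> 1 \<Longrightarrow> G k \<ge> 0"
  shows "(\<Sum>k=1..N. G k * (\<Sum>\<tau>=1..k - 1. a \<tau>)) \<le> (\<Sum>k=1..N. a k * (\<Sum>\<tau>=k..N. G \<tau>))"
proof (induction N)
  case (Suc N)
  have "(\<Sum>k=1..Suc N. a k * (\<Sum>\<tau>=k..Suc N. G \<tau>))
      = (\<Sum>k=1..N. a k * (\<Sum>\<tau>=k..N. G \<tau>)) + G (Suc N) * (\<Sum>k=1..Suc N. a k)"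
    by (simp add: sum.distrib sum_distrib_left sum_distrib_right algebra_simps)
  moreover have "G (Suc N) * (\<Sum>k=1..N. a k) \<le> G (Suc N) * (\<Sum>k=1..Suc N. a k)"
    using assms by (intro mult_left_mono) auto
  ultimately show ?case
    using Suc by simp
qed simp

locale accelerated_gradient =
  fixes \<Psi> :: "'a::real_inner \<Rightarrow> real"
    and grad :: "'a \<Rightarrow> 'a"
    and L :: real
    and x xmd xag :: "nat \<Rightarrow> 'a"
    and \<alpha> \<beta> lam \<Gamma> :: "nat \<Rightarrow> real"
  assumes grad: "\<And>z. (\<Psi> has_derivative (\<lambda>h. grad z \<bullet> h)) (at z)"
    and L_pos: "L > 0"
    and Lip: "\<And>u v. norm (grad v - grad u) \<le> L * norm (v - u)"
    and alpha_1: "\<alpha> 1 = 1"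
    and alpha_range: "\<And>k. k \<ge> 2 \<Longrightarrow> 0 < \<alpha> k \<and> \<alpha> k < 1"
    and lam_pos: "\<And>k. k \<ge> 1 \<Longrightarrow> lam k > 0"
    and xag_0: "xag 0 = x 0"
    and xmd_eq: "\<And>k. k \<ge> 1 \<Longrightarrow> xmd k = (1 - \<alpha> k) *\<^sub>R xag (k - 1) + \<alpha> k *\<^sub>R x (k - 1)"
    and x_eq: "\<And>k. k \<ge> 1 \<Longrightarrow> x k = x (k - 1) - lam k *\<^sub>R grad (xmd k)"
    and xag_eq: "\<And>k. k \<ge> 1 \<Longrightarrow> xag k = xmd k - \<beta> k *\<^sub>R grad (xmd k)"
    and Gamma_1: "\<Gamma> 1 = 1"
    and Gamma_rec: "\<And>k. k \<ge> 2 \<Longrightarrow> \<Gamma> k = (1 - \<alpha> k) * \<Gamma> (k - 1)"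
begin

lemma alpha_pos_le_1:
  assumes "k \<ge> 1"
  shows "0 < \<alpha> k" "\<alpha> k \<le> 1"
  using alpha_1 alpha_range[of k] assms by (cases "k = 1"; simp)+

lemma Gamma_Suc:
  assumes "k \<ge> 1"
  shows "\<Gamma> (Suc k) = (1 - \<alpha> (Suc k)) * \<Gamma> k"
  using Gamma_rec[of "Suc k"] assms by simp

lemma Gamma_pos:
  assumes "k \<ge> 1"
  shows "\<Gamma> k > 0"
  using assms
proof (induction k rule: dec_induct)
  case (step k)
  then show ?case
    using Gamma_Suc alpha_range[of "Suc k"] by simp
qed (use Gamma_1 in simp)

lemma xmd_minus_x:
  assumes "k \<ge> 1"
  shows "xmd k - x (k - 1) = (1 - \<alpha> k) *\<^sub>R (xag (k - 1) - x (k - 1))"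
  using xmd_eq[OF assms] by (simp add: algebra_simps)

lemma xag_minus_x_rec:
  assumes "k \<ge> 1"
  shows "xag k - x k
    = (1 - \<alpha> k) *\<^sub>R (xag (k - 1) - x (k - 1)) + (lam k - \<beta> k) *\<^sub>R grad (xmd k)"
proof -
  have "xag k - x k = (xmd k - x (k - 1)) + (lam k - \<beta> k) *\<^sub>R grad (xmd k)"
    by (simp only: xag_eq[OF assms] x_eq[OF assms]) (simp add: algebra_simps)
  then show ?thesis
    unfolding xmd_minus_x[OF assms] .
qed

lemma norm_xag_minus_x_step:
  assumes "k \<ge> 1"
  shows "(norm (xag k - x k))\<^sup>2
    \<le> (1 - \<alpha> k) * (norm (xag (k - 1) - x (k - 1)))\<^sup>2
      + (lam k - \<beta> k)\<^sup>2 / \<alpha> k * (norm (grad (xmd k)))\<^sup>2"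
proof -
  note a = alpha_pos_le_1[OF assms]
  have eq: "xag k - x k = (1 - \<alpha> k) *\<^sub>R (xag (k - 1) - x (k - 1))
      + \<alpha> k *\<^sub>R (((lam k - \<beta> k) / \<alpha> k) *\<^sub>R grad (xmd k))"
    using xag_minus_x_rec[OF assms] a by simp
  have "(norm (xag k - x k))\<^sup>2 \<le> (1 - \<alpha> k) * (norm (xag (k - 1) - x (k - 1)))\<^sup>2
      + \<alpha> k * (norm (((lam k - \<beta> k) / \<alpha> k) *\<^sub>R grad (xmd k)))\<^sup>2"
    unfolding eq using a by (intro power2_norm_convex_combination_le) auto
  also have "\<alpha> k * (norm (((lam k - \<beta> k) / \<alpha> k) *\<^sub>R grad (xmd k)))\<^sup>2
      = (lam k - \<beta> k)\<^sup>2 / \<alpha> k * (norm (grad (xmd k)))\<^sup>2"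
    using a by (simp add: power2_eq_square field_simps)
  finally show ?thesis .
qed

definition xag_minus_x_weight :: "nat \<Rightarrow> real" where
  "xag_minus_x_weight k = (lam k - \<beta> k)\<^sup>2 / (\<Gamma> k * \<alpha> k) * (norm (grad (xmd k)))\<^sup>2"

definition xag_minus_x_bound :: "nat \<Rightarrow> real" where
  "xag_minus_x_bound k = (\<Sum>\<tau>=1..k. xag_minus_x_weight \<tau>)"

lemma xag_minus_x_weight_nonneg: "k \<ge> 1 \<Longrightarrow> xag_minus_x_weight k \<ge> 0"
  unfolding xag_minus_x_weight_def
  using Gamma_pos alpha_pos_le_1 by (intro mult_nonneg_nonneg divide_nonneg_pos) auto

lemma norm_xag_minus_x_le: "(norm (xag k - x k))\<^sup>2 \<le> \<Gamma> k * xag_minus_x_bound k"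
proof (induction k)
  case 0
  then show ?case
    by (simp add: xag_0 xag_minus_x_bound_def)
next
  case (Suc k)
  have G: "\<Gamma> (Suc k) > 0" and a: "0 < \<alpha> (Suc k)" "\<alpha> (Suc k) \<le> 1"
    using Gamma_pos alpha_pos_le_1 by auto
  have "(1 - \<alpha> (Suc k)) * (norm (xag k - x k))\<^sup>2 \<le> \<Gamma> (Suc k) * xag_minus_x_bound k"
  proof (cases "k = 0")
    case True
    then show ?thesis
      by (simp add: xag_0 xag_minus_x_bound_def)
  next
    case False
    then have "(1 - \<alpha> (Suc k)) * (norm (xag k - x k))\<^sup>2
        \<le> (1 - \<alpha> (Suc k)) * (\<Gamma> k * xag_minus_x_bound k)"
      using Suc a by (intro mult_left_mono) auto
    then show ?thesis
      using Gamma_Suc False by simp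
  qed
  moreover have "(lam (Suc k) - \<beta> (Suc k))\<^sup>2 / \<alpha> (Suc k) * (norm (grad (xmd (Suc k))))\<^sup>2
      = \<Gamma> (Suc k) * xag_minus_x_weight (Suc k)"
    using G by (simp add: xag_minus_x_weight_def)
  ultimately show ?case
    using norm_xag_minus_x_step[of "Suc k"] by (simp add: xag_minus_x_bound_def distrib_left)
qed

lemma xag_minus_x_bound_nonneg: "xag_minus_x_bound k \<ge> 0"
  unfolding xag_minus_x_bound_def using xag_minus_x_weight_nonneg by (intro sum_nonneg) auto

lemma norm_xmd_minus_x_le:
  assumes "k \<ge> 1"
  shows "(norm (xmd k - x (k - 1)))\<^sup>2 \<le> \<Gamma> k * xag_minus_x_bound (k - 1)"
proof (cases "k = 1")
  case True
  then show ?thesis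
    using xmd_minus_x[OF assms] alpha_1 by (simp add: One_nat_def xag_minus_x_bound_def)
next
  case False
  then have k: "k - 1 \<ge> 1" "\<Gamma> k = (1 - \<alpha> k) * \<Gamma> (k - 1)" and a: "0 < \<alpha> k" "\<alpha> k < 1"
    using assms Gamma_rec alpha_range by auto
  have "(norm (xmd k - x (k - 1)))\<^sup>2 = (1 - \<alpha> k)\<^sup>2 * (norm (xag (k - 1) - x (k - 1)))\<^sup>2"
    using xmd_minus_x[OF assms] a by (simp add: power_mult_distrib)
  also have "\<dots> \<le> (1 - \<alpha> k)\<^sup>2 * (\<Gamma> (k - 1) * xag_minus_x_bound (k - 1))"
    using norm_xag_minus_x_le[of "k - 1"] by (simp add: mult_left_mono)
  also have "\<dots> \<le> (1 - \<alpha> k) * (\<Gamma> (k - 1) * xag_minus_x_bound (k - 1))"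
    using a Gamma_pos[OF k(1)] xag_minus_x_bound_nonneg
    by (intro mult_right_mono) (auto simp: power2_eq_square)
  finally show ?thesis
    using k by simp
qed

lemma x_descent_step:
  assumes k: "k \<ge> 1"
  shows "\<Psi> (x k) \<le> \<Psi> (x (k - 1)) - lam k * (1 - L * lam k) * (norm (grad (xmd k)))\<^sup>2
      + L / 2 * (\<Gamma> k * xag_minus_x_bound (k - 1))"
proof -
  have "norm (grad (x (k - 1)) - grad (xmd k)) \<le> L * norm (xmd k - x (k - 1))"
    using Lip[of "xmd k" "x (k - 1)"] by (simp add: norm_minus_commute)
  then have "(norm (grad (x (k - 1)) - grad (xmd k)))\<^sup>2 \<le> L\<^sup>2 * (norm (xmd k - x (k - 1)))\<^sup>2"
    by (metis norm_ge_zero power_mono power_mult_distrib)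
  also have "\<dots> \<le> L\<^sup>2 * (\<Gamma> k * xag_minus_x_bound (k - 1))"
    using norm_xmd_minus_x_le[OF k] by (simp add: mult_left_mono)
  finally have "(norm (grad (x (k - 1)) - grad (xmd k)))\<^sup>2 / (2 * L)
      \<le> L / 2 * (\<Gamma> k * xag_minus_x_bound (k - 1))"
    using L_pos by (simp add: divide_le_eq power2_eq_square field_simps)
  then show ?thesis
    using inexact_gradient_step[OF grad Lip L_pos, of "x (k - 1)" "lam k" "grad (xmd k)"] x_eq[OF k]
    by simp
qed

lemma x_descent:
  "\<Psi> (x N) \<le> \<Psi> (x 0) - (\<Sum>k=1..N. lam k * (1 - L * lam k) * (norm (grad (xmd k)))\<^sup>2)
      + L / 2 * (\<Sum>k=1..N. \<Gamma> k * xag_minus_x_bound (k - 1))"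
proof (induction N)
  case (Suc N)
  then show ?case
    using x_descent_step[of "Suc N"] by (simp add: algebra_simps)
qed simp

definition descent_coeff :: "nat \<Rightarrow> nat \<Rightarrow> real" where
  "descent_coeff N k = 1 - L * lam k
    - (L * (lam k - \<beta> k)^2 / (2 * \<alpha> k * \<Gamma> k * lam k)) * (\<Sum>\<tau>=k..N. \<Gamma> \<tau>)"

lemma sum_descent_coeff_le:
  "(\<Sum>k=1..N. lam k * descent_coeff N k * (norm (grad (xmd k)))\<^sup>2) \<le> \<Psi> (x 0) - \<Psi> (x N)"
proof -
  have "lam k * descent_coeff N k * (norm (grad (xmd k)))\<^sup>2
      = lam k * (1 - L * lam k) * (norm (grad (xmd k)))\<^sup>2
        - L / 2 * (xag_minus_x_weight k * (\<Sum>\<tau>=k..N. \<Gamma> \<tau>))"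
    if "k \<in> {1..N}" for k
    using that lam_pos[of k] alpha_pos_le_1[of k] Gamma_pos[of k]
    by (simp add: descent_coeff_def xag_minus_x_weight_def field_simps)
  then have "(\<Sum>k=1..N. lam k * descent_coeff N k * (norm (grad (xmd k)))\<^sup>2)
      = (\<Sum>k=1..N. lam k * (1 - L * lam k) * (norm (grad (xmd k)))\<^sup>2)
        - L / 2 * (\<Sum>k=1..N. xag_minus_x_weight k * (\<Sum>\<tau>=k..N. \<Gamma> \<tau>))"
    by (simp add: sum_subtractf sum_distrib_left)
  moreover have "(\<Sum>k=1..N. \<Gamma> k * xag_minus_x_bound (k - 1))
      \<le> (\<Sum>k=1..N. xag_minus_x_weight k * (\<Sum>\<tau>=k..N. \<Gamma> \<tau>))"
    unfolding xag_minus_x_bound_def using xag_minus_x_weight_nonneg Gamma_pos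
    by (intro sum_weighted_partial_sums_le) (auto intro: less_imp_le)
  then have "L / 2 * (\<Sum>k=1..N. \<Gamma> k * xag_minus_x_bound (k - 1))
      \<le> L / 2 * (\<Sum>k=1..N. xag_minus_x_weight k * (\<Sum>\<tau>=k..N. \<Gamma> \<tau>))"
    using L_pos by (intro mult_left_mono) auto
  ultimately show ?thesis
    using x_descent[of N] by linarith
qed

lemma min_norm_grad_le:
  assumes bdd: "bdd_below (range \<Psi>)" and N: "N \<ge> 1"
    and C_pos: "\<forall>k\<in>{1..N}. descent_coeff N k > 0"
  shows "Min ((\<lambda>k. (norm (grad (xmd k)))\<^sup>2) ` {1..N})
    \<le> (\<Psi> (x 0) - (INF z. \<Psi> z)) / (\<Sum>k=1..N. lam k * descent_coeff N k)"
proof (rule Min_le_weighted_bound)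
  show "(\<Sum>k=1..N. lam k * descent_coeff N k * (norm (grad (xmd k)))\<^sup>2) \<le> \<Psi> (x 0) - (INF z. \<Psi> z)"
    using sum_descent_coeff_le[of N] cINF_lower[OF bdd, of "x N"] by simp
qed (use N C_pos lam_pos in auto)

end

locale accelerated_gradient_convex = accelerated_gradient +
  fixes xs :: 'a
  assumes convex: "convex_on UNIV \<Psi>"
    and minimizer: "\<And>z. \<Psi> xs \<le> \<Psi> z"
    and beta_bounds: "\<And>k. k \<ge> 1 \<Longrightarrow> \<alpha> k * lam k \<le> \<beta> k \<and> \<beta> k < 1 / L"
    and ratio_antimono:
      "\<And>k. k \<ge> 1 \<Longrightarrow> \<alpha> (k + 1) / (lam (k + 1) * \<Gamma> (k + 1)) \<le> \<alpha> k / (lam k * \<Gamma> k)"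
begin

lemma descent_weight_pos:
  assumes "k \<ge> 1"
  shows "\<beta> k * (1 - L * \<beta> k) / \<Gamma> k > 0"
proof -
  have "0 < \<alpha> k * lam k"
    using alpha_pos_le_1[OF assms] lam_pos[OF assms] by simp
  then have "0 < \<beta> k" "L * \<beta> k < 1"
    using beta_bounds[OF assms] L_pos by (auto simp: field_simps)
  then show ?thesis
    using Gamma_pos[OF assms] by simp
qed

lemma optimality_gap_step:
  assumes k: "k \<ge> 1"
  shows "\<Psi> (xag k) - \<Psi> xs \<le> (1 - \<alpha> k) * (\<Psi> (xag (k - 1)) - \<Psi> xs)
    + \<alpha> k / (2 * lam k) * ((norm (x (k - 1) - xs))\<^sup>2 - (norm (x k - xs))\<^sup>2)
    - \<beta> k * (1 - L * \<beta> k) / 2 * (norm (grad (xmd k)))\<^sup>2"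
proof -
  define g where "g = grad (xmd k)"
  define p where "p = g \<bullet> (x (k - 1) - xs)"
  note a = alpha_pos_le_1[OF k]
  have descent: "\<Psi> (xag k) \<le> \<Psi> (xmd k) - \<beta> k * (1 - L * \<beta> k / 2) * (norm g)\<^sup>2"
    using gradient_step_descent[OF grad Lip, of "xmd k" "\<beta> k"] xag_eq[OF k] by (simp add: g_def)
  have "\<Psi> (xmd k) + g \<bullet> ((1 - \<alpha> k) *\<^sub>R xag (k - 1) + \<alpha> k *\<^sub>R xs - xmd k)
      \<le> (1 - \<alpha> k) * \<Psi> (xag (k - 1)) + \<alpha> k * \<Psi> xs"
    unfolding g_def using a by (intro convex_combination_gradient_lower_bound[OF grad convex]) auto
  moreover have "(1 - \<alpha> k) *\<^sub>R xag (k - 1) + \<alpha> k *\<^sub>R xs - xmd k = - (\<alpha> k *\<^sub>R (x (k - 1) - xs))"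
    using xmd_eq[OF k] by (simp add: algebra_simps)
  ultimately have convexity:
      "\<Psi> (xmd k) - \<alpha> k * p \<le> (1 - \<alpha> k) * \<Psi> (xag (k - 1)) + \<alpha> k * \<Psi> xs"
    by (simp add: p_def)
  have distance:
      "(norm (x k - xs))\<^sup>2 = (norm (x (k - 1) - xs))\<^sup>2 - 2 * lam k * p + (lam k)\<^sup>2 * (norm g)\<^sup>2"
    unfolding x_eq[OF k] p_def g_def by (rule power2_norm_step_distance)
  have "\<alpha> k * p = \<alpha> k / (2 * lam k) * (2 * lam k * p - (lam k)\<^sup>2 * (norm g)\<^sup>2)
      + \<alpha> k * lam k / 2 * (norm g)\<^sup>2"
    using lam_pos[OF k] by (simp add: field_simps power2_eq_square)
  also have "2 * lam k * p - (lam k)\<^sup>2 * (norm g)\<^sup>2 = (norm (x (k - 1) - xs))\<^sup>2 - (norm (x k - xs))\<^sup>2"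
    using distance by simp
  finally have p_eq: "\<alpha> k * p = \<alpha> k / (2 * lam k) * ((norm (x (k - 1) - xs))\<^sup>2 - (norm (x k - xs))\<^sup>2)
      + \<alpha> k * lam k / 2 * (norm g)\<^sup>2" .
  have "\<Psi> (xag k) - \<Psi> xs \<le> (1 - \<alpha> k) * (\<Psi> (xag (k - 1)) - \<Psi> xs) + \<alpha> k * p
      - \<beta> k * (1 - L * \<beta> k / 2) * (norm g)\<^sup>2"
    using descent convexity by (simp add: algebra_simps)
  also have "\<dots> \<le> (1 - \<alpha> k) * (\<Psi> (xag (k - 1)) - \<Psi> xs)
      + \<alpha> k / (2 * lam k) * ((norm (x (k - 1) - xs))\<^sup>2 - (norm (x k - xs))\<^sup>2)
      + \<beta> k / 2 * (norm g)\<^sup>2 - \<beta> k * (1 - L * \<beta> k / 2) * (norm g)\<^sup>2"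
    unfolding p_eq using beta_bounds[OF k] by (simp add: mult_right_mono)
  also have "\<dots> = (1 - \<alpha> k) * (\<Psi> (xag (k - 1)) - \<Psi> xs)
      + \<alpha> k / (2 * lam k) * ((norm (x (k - 1) - xs))\<^sup>2 - (norm (x k - xs))\<^sup>2)
      - \<beta> k * (1 - L * \<beta> k) / 2 * (norm g)\<^sup>2"
    by (simp add: field_simps)
  finally show ?thesis
    by (simp add: g_def)
qed


lemma optimality_gap_telescoped:
  assumes "N \<ge> 1"
  shows "(\<Psi> (xag N) - \<Psi> xs) / \<Gamma> N
      + (\<Sum>k=1..N. \<beta> k * (1 - L * \<beta> k) / \<Gamma> k * (norm (grad (xmd k)))\<^sup>2) / 2
    \<le> (norm (x 0 - xs))\<^sup>2 / (2 * lam 1) - \<alpha> N / (2 * lam N * \<Gamma> N) * (norm (x N - xs))\<^sup>2"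
  using assms
proof (induction N rule: dec_induct)
  case base
  then show ?case
    using optimality_gap_step[of 1] alpha_1 Gamma_1 lam_pos[of 1] by (simp add: field_simps)
next
  case (step n)
  let ?D = "\<lambda>k. (norm (x k - xs))\<^sup>2"
  let ?c = "\<lambda>k. \<alpha> k / (2 * lam k * \<Gamma> k)"
  let ?b = "\<lambda>k. \<beta> k * (1 - L * \<beta> k) / \<Gamma> k * (norm (grad (xmd k)))\<^sup>2"
  let ?m = "Suc n"
  have n: "\<Gamma> n > 0" "\<Gamma> ?m > 0" "\<Gamma> ?m = (1 - \<alpha> ?m) * \<Gamma> n"
    using Gamma_pos[of n] Gamma_pos[of ?m] Gamma_Suc[of n] step by simp_all
  have "(\<Psi> (xag ?m) - \<Psi> xs) / \<Gamma> ?m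
      \<le> ((1 - \<alpha> ?m) * (\<Psi> (xag n) - \<Psi> xs) + \<alpha> ?m / (2 * lam ?m) * (?D n - ?D ?m)
        - \<beta> ?m * (1 - L * \<beta> ?m) / 2 * (norm (grad (xmd ?m)))\<^sup>2) / \<Gamma> ?m"
    using optimality_gap_step[of ?m] n by (simp add: divide_right_mono)
  also have "\<dots> = (1 - \<alpha> ?m) / \<Gamma> ?m * (\<Psi> (xag n) - \<Psi> xs) + ?c ?m * ?D n - ?c ?m * ?D ?m - ?b ?m / 2"
    using n(2) lam_pos[of ?m] by (simp add: field_simps)
  also have "(1 - \<alpha> ?m) / \<Gamma> ?m * (\<Psi> (xag n) - \<Psi> xs) = (\<Psi> (xag n) - \<Psi> xs) / \<Gamma> n"
    using n by auto
  finally have "(\<Psi> (xag ?m) - \<Psi> xs) / \<Gamma> ?m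
      \<le> (\<Psi> (xag n) - \<Psi> xs) / \<Gamma> n + ?c ?m * ?D n - ?c ?m * ?D ?m - ?b ?m / 2" .
  moreover have "?c ?m * ?D n \<le> ?c n * ?D n"
    using ratio_antimono[of n] step by (intro mult_right_mono) auto
  moreover have "(\<Sum>k=1..?m. ?b k) / 2 = (\<Sum>k=1..n. ?b k) / 2 + ?b ?m / 2"
    by (simp add: add_divide_distrib)
  ultimately show ?case
    using step.IH by linarith
qed

lemma xag_optimality_gap_le:
  assumes "N \<ge> 1"
  shows "\<Psi> (xag N) - \<Psi> xs \<le> \<Gamma> N * (norm (x 0 - xs))\<^sup>2 / (2 * lam 1)"
proof -
  have "(\<Psi> (xag N) - \<Psi> xs) / \<Gamma> N \<le> (norm (x 0 - xs))\<^sup>2 / (2 * lam 1)"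
  proof -
    have "0 \<le> (\<Sum>k=1..N. \<beta> k * (1 - L * \<beta> k) / \<Gamma> k * (norm (grad (xmd k)))\<^sup>2)"
      using descent_weight_pos by (intro sum_nonneg mult_nonneg_nonneg) (auto intro: less_imp_le)
    moreover have "0 \<le> \<alpha> N / (2 * lam N * \<Gamma> N) * (norm (x N - xs))\<^sup>2"
      using alpha_pos_le_1[OF assms] lam_pos[OF assms] Gamma_pos[OF assms] by simp
    ultimately show ?thesis
      using optimality_gap_telescoped[OF assms] by linarith
  qed
  then show ?thesis
    using Gamma_pos[OF assms] by (simp add: pos_divide_le_eq mult.commute)
qed

lemma min_norm_grad_le_convex:
  assumes N: "N \<ge> 1"
  shows "Min ((\<lambda>k. (norm (grad (xmd k)))\<^sup>2) ` {1..N})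
    \<le> (norm (x 0 - xs))\<^sup>2 / (lam 1 * (\<Sum>k=1..N. \<beta> k * (1 - L * \<beta> k) / \<Gamma> k))"
proof -
  have "(\<Sum>k=1..N. \<beta> k * (1 - L * \<beta> k) / \<Gamma> k * (norm (grad (xmd k)))\<^sup>2)
      \<le> (norm (x 0 - xs))\<^sup>2 / lam 1"
  proof -
    have "0 \<le> (\<Psi> (xag N) - \<Psi> xs) / \<Gamma> N"
      using minimizer Gamma_pos[OF N] by simp
    moreover have "0 \<le> \<alpha> N / (2 * lam N * \<Gamma> N) * (norm (x N - xs))\<^sup>2"
      using alpha_pos_le_1[OF N] lam_pos[OF N] Gamma_pos[OF N] by simp
    ultimately have "(\<Sum>k=1..N. \<beta> k * (1 - L * \<beta> k) / \<Gamma> k * (norm (grad (xmd k)))\<^sup>2) / 2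
        \<le> (norm (x 0 - xs))\<^sup>2 / (2 * lam 1)"
      using optimality_gap_telescoped[OF N] by linarith
    then show ?thesis
      by (simp add: divide_le_cancel)
  qed
  then have "Min ((\<lambda>k. (norm (grad (xmd k)))\<^sup>2) ` {1..N})
      \<le> (norm (x 0 - xs))\<^sup>2 / lam 1 / (\<Sum>k=1..N. \<beta> k * (1 - L * \<beta> k) / \<Gamma> k)"
    using N descent_weight_pos by (intro Min_le_weighted_bound) auto
  then show ?thesis
    by (simp add: divide_divide_eq_left)
qed

end

theorem theorem1:
  fixes \<Psi> :: "'a::euclidean_space \<Rightarrow> real"
    and grad :: "'a \<Rightarrow> 'a"
    and L :: real
    and x0 :: 'a
    and x xmd xag :: "nat \<Rightarrow> 'a"
    and \<alpha> \<beta> lam \<Gamma> :: "nat \<Rightarrow> real"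
  assumes grad: "\<And>z. (\<Psi> has_derivative (\<lambda>h. grad z \<bullet> h)) (at z)"
    and Lpos: "L > 0"
    and Lip: "\<And>u v. norm (grad v - grad u) \<le> L * norm (v - u)"
    and bdd: "bdd_below (range \<Psi>)"
    and a1: "\<alpha> 1 = 1"
    and ak: "\<And>k. k \<ge> 2 \<Longrightarrow> 0 < \<alpha> k \<and> \<alpha> k < 1"
    and bpos: "\<And>k. k \<ge> 1 \<Longrightarrow> \<beta> k > 0"
    and lpos: "\<And>k. k \<ge> 1 \<Longrightarrow> lam k > 0"
    and x_0: "x 0 = x0"
    and xag_0: "xag 0 = x0"
    and xmd_def: "\<And>k. k \<ge> 1 \<Longrightarrow> xmd k = (1 - \<alpha> k) *\<^sub>R xag (k - 1) + \<alpha> k *\<^sub>R x (k - 1)"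
    and x_def: "\<And>k. k \<ge> 1 \<Longrightarrow> x k = x (k - 1) - lam k *\<^sub>R grad (xmd k)"
    and xag_def: "\<And>k. k \<ge> 1 \<Longrightarrow> xag k = xmd k - \<beta> k *\<^sub>R grad (xmd k)"
    and G1: "\<Gamma> 1 = 1"
    and Gk: "\<And>k. k \<ge> 2 \<Longrightarrow> \<Gamma> k = (1 - \<alpha> k) * \<Gamma> (k - 1)"
  shows
    "(\<forall>N\<ge>1.
        (\<forall>k\<in>{1..N}. 1 - L * lam k
            - (L * (lam k - \<beta> k)^2 / (2 * \<alpha> k * \<Gamma> k * lam k)) * (\<Sum>\<tau>=k..N. \<Gamma> \<tau>) > 0)
        \<longrightarrow> Min ((\<lambda>k. (norm (grad (xmd k)))^2) ` {1..N})
            \<le> (\<Psi> x0 - (INF z. \<Psi> z)) /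
               (\<Sum>k=1..N. lam k * (1 - L * lam k
                  - (L * (lam k - \<beta> k)^2 / (2 * \<alpha> k * \<Gamma> k * lam k)) * (\<Sum>\<tau>=k..N. \<Gamma> \<tau>))))
     \<and>
     (convex_on UNIV \<Psi> \<longrightarrow>
      (\<forall>xs. (\<forall>z. \<Psi> xs \<le> \<Psi> z) \<longrightarrow>
        (\<forall>k\<ge>1. \<alpha> k * lam k \<le> \<beta> k \<and> \<beta> k < 1 / L) \<longrightarrow>
        (\<forall>k\<ge>1. \<alpha> (k + 1) / (lam (k + 1) * \<Gamma> (k + 1)) \<le> \<alpha> k / (lam k * \<Gamma> k)) \<longrightarrow>
        (\<forall>N\<ge>1.
           Min ((\<lambda>k. (norm (grad (xmd k)))^2) ` {1..N})
             \<le> (norm (x0 - xs))^2 / (lam 1 * (\<Sum>k=1..N. \<beta> k * (1 - L * \<beta> k) / \<Gamma> k))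
           \<and> \<Psi> (xag N) - \<Psi> xs \<le> \<Gamma> N * (norm (x0 - xs))^2 / (2 * lam 1))))" (is "?nonconvex \<and> ?convex")
proof -
  interpret accelerated_gradient \<Psi> grad L x xmd xag \<alpha> \<beta> lam \<Gamma>
    using grad Lpos Lip a1 ak lpos xmd_def x_def xag_def G1 Gk
    by unfold_locales (simp_all add: x_0 xag_0)
  have ?nonconvex
    using min_norm_grad_le[OF bdd] by (simp add: x_0 descent_coeff_def)
  moreover have ?convex
  proof (intro impI allI conjI)
    fix xs :: 'a and N :: nat
    assume "convex_on UNIV \<Psi>" "\<forall>z. \<Psi> xs \<le> \<Psi> z"
      "\<forall>k\<ge>1. \<alpha> k * lam k \<le> \<beta> k \<and> \<beta> k < 1 / L"
      "\<forall>k\<ge>1. \<alpha> (k + 1) / (lam (k + 1) * \<Gamma> (k + 1)) \<le> \<alpha> k / (lam k * \<Gamma> k)"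
      and N: "N \<ge> 1"
    then interpret accelerated_gradient_convex \<Psi> grad L x xmd xag \<alpha> \<beta> lam \<Gamma> xs
      by unfold_locales auto
    show "Min ((\<lambda>k. (norm (grad (xmd k)))\<^sup>2) ` {1..N})
        \<le> (norm (x0 - xs))\<^sup>2 / (lam 1 * (\<Sum>k=1..N. \<beta> k * (1 - L * \<beta> k) / \<Gamma> k))"
      using min_norm_grad_le_convex[OF N] by (simp add: x_0)
    show "\<Psi> (xag N) - \<Psi> xs \<le> \<Gamma> N * (norm (x0 - xs))\<^sup>2 / (2 * lam 1)"
      using xag_optimality_gap_le[OF N] by (simp add: x_0)
  qed
  ultimately show ?thesis ..
qed

end
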